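(* Let $\varphi$ be a toric plurisubharmonic function with analytic singularities on the unit polydisk $D(0,1)\subseteq\mathbf{C}^n$. Then there exist $c\in\mathbf{R}_{>0}$ and multi-indices $\alpha_1,\dots,\alpha_m\in\mathbf{Z}^n_{\ge0}$ such that $\varphi-\frac{c}{2}\log\left(|z^{\alpha_1}|^2+\cdots+|z^{\alpha_m}|^2\right)$ is bounded near $0$.
   Context: A psh function on $D(0,1)$ is toric if it is invariant under $(z_1,\dots,z_n)\mapsto(e^{i\theta_1}z_1,\dots,e^{i\theta_n}z_n)$ for all real $\theta_j$. A psh function has analytic singularities if locally it is of the form $c\log(|g_1|^2+\cdots+|g_r|^2)+O(1)$ with $c\ge0$ and $g_j$ holomorphic. $z^\alpha=z_1^{\alpha^{(1)}}\cdots z_n^{\alpha^{(n)}}$ for a multi-index $\alpha$. *)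

theory Defs
  imports "HOL-Analysis.Analysis"
begin

text \<open>Points of C^n are vectors of type complex^'n (n = CARD('n)).\<close>

definition unit_polydisk :: "(complex ^ 'n) set" where
  "unit_polydisk = {z. \<forall>i. cmod (z $ i) < 1}"

definition elog :: "real \<Rightarrow> ereal" where
  "elog x = (if x = 0 then -\<infinity> else ereal (ln x))"

definition holo_on :: "(complex ^ 'n) set \<Rightarrow> (complex ^ 'n \<Rightarrow> complex) \<Rightarrow> bool" where
  "holo_on U g \<longleftrightarrow> open U \<and>
     (\<forall>z\<in>U. \<exists>L. (g has_derivative L) (at z) \<and> (\<forall>(c::complex) v. L (c *s v) = c * L v))"

text \<open>Mean value of an upper-bounded extended-real function over the circle
  t \<mapsto> a + e^{it} b, computed with an upper bound M (the result does not depend on M).\<close>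
definition circle_mean_bound ::
  "(complex ^ 'n \<Rightarrow> ereal) \<Rightarrow> complex ^ 'n \<Rightarrow> complex ^ 'n \<Rightarrow> real \<Rightarrow> ereal" where
  "circle_mean_bound \<phi> a b M =
     ereal M - enn2ereal (\<integral>\<^sup>+ t\<in>{0..2*pi}. e2ennreal (ereal M - \<phi> (a + cis t *s b)) \<partial>lborel)
               / ereal (2 * pi)"

definition psh :: "(complex ^ 'n) set \<Rightarrow> (complex ^ 'n \<Rightarrow> ereal) \<Rightarrow> bool" where
  "psh U \<phi> \<longleftrightarrow> open U \<and>
     (\<forall>z\<in>U. \<phi> z < \<infinity>) \<and>
     (\<forall>z\<in>U. Limsup (at z) \<phi> \<le> \<phi> z) \<and>
     (\<exists>z\<in>U. \<phi> z \<noteq> -\<infinity>) \<and>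
     (\<forall>a b. (\<forall>\<zeta>::complex. cmod \<zeta> \<le> 1 \<longrightarrow> a + \<zeta> *s b \<in> U) \<longrightarrow>
        (\<forall>M::real. (\<forall>t. \<phi> (a + cis t *s b) \<le> ereal M) \<longrightarrow> \<phi> a \<le> circle_mean_bound \<phi> a b M))"

definition toric :: "(complex ^ 'n) set \<Rightarrow> (complex ^ 'n \<Rightarrow> ereal) \<Rightarrow> bool" where
  "toric U \<phi> \<longleftrightarrow> (\<forall>\<theta>::'n \<Rightarrow> real. \<forall>z\<in>U. \<phi> (\<chi> i. cis (\<theta> i) * z $ i) = \<phi> z)"

definition analytic_sing :: "(complex ^ 'n) set \<Rightarrow> (complex ^ 'n \<Rightarrow> ereal) \<Rightarrow> bool" where
  "analytic_sing U \<phi> \<longleftrightarrow>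
     (\<forall>x\<in>U. \<exists>V. open V \<and> x \<in> V \<and> V \<subseteq> U \<and>
        (\<exists>c::real. c \<ge> 0 \<and> (\<exists>gs :: (complex ^ 'n \<Rightarrow> complex) list.
           (\<forall>g\<in>set gs. holo_on V g) \<and>
           (\<exists>C::real. \<forall>z\<in>V.
              ereal c * elog (\<Sum>g\<leftarrow>gs. (cmod (g z))\<^sup>2) - ereal C \<le> \<phi> z \<and>
              \<phi> z \<le> ereal c * elog (\<Sum>g\<leftarrow>gs. (cmod (g z))\<^sup>2) + ereal C))))"

definition monomial :: "('n::finite \<Rightarrow> nat) \<Rightarrow> complex ^ 'n \<Rightarrow> complex" where
  "monomial \<alpha> z = (\<Prod>i\<in>UNIV. (z $ i) ^ \<alpha> i)"

end

theory Submission
  imports Defs "HOL-Complex_Analysis.Cauchy_Integral_Formula"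
begin

text \<open>Near the origin \<open>\<phi> = c log S + O(1)\<close> with \<open>S = \<Sum>|g\<^sub>j|\<^sup>2\<close> and \<open>g\<^sub>j\<close> holomorphic
  on a closed polydisc. Expand the \<open>g\<^sub>j\<close> in power series by the Cauchy formula on the
  distinguished boundary torus, and let \<open>M\<close> be the finite set (Dickson's lemma) of minimal
  exponents among those occurring in some \<open>g\<^sub>j\<close>. Every occurring monomial is divisible by
  some \<open>z\<^sup>\<beta>\<close>, \<open>\<beta> \<in> M\<close>, so on the half polydisc \<open>S \<le> K P\<close> with \<open>P = \<Sum>\<^sub>\<beta>\<^sub>\<in>\<^sub>M |z\<^sup>\<beta>|\<^sup>2\<close>.
  Conversely the \<open>\<beta>\<close>-th Taylor term of \<open>g\<^sub>j\<close> at \<open>z\<close> is a Fourier coefficient of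
  \<open>\<theta> \<mapsto> g\<^sub>j(e\<^sup>i\<^sup>\<theta>z)\<close>, and toric invariance of \<open>\<phi>\<close> bounds \<open>S\<close> on the torus orbit of \<open>z\<close> by a
  constant multiple of \<open>S(z)\<close>; hence \<open>P \<le> K' S\<close>. Taking logarithms gives the claim with
  the constant \<open>2c\<close>.\<close>

section \<open>Iterated integrals over the unit cube\<close>

definition vec_upd :: "'a ^ 'n \<Rightarrow> 'n \<Rightarrow> 'a \<Rightarrow> 'a ^ 'n" where
  "vec_upd x j a = (\<chi> i. if i = j then a else x $ i)"

lemma vec_upd_nth [simp]: "vec_upd x j a $ i = (if i = j then a else x $ i)"
  by (simp add: vec_upd_def)

lemma vec_upd_same [simp]: "vec_upd x j (x $ j) = x"
  by (simp add: vec_upd_def vec_eq_iff)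

lemma continuous_on_vec_upd [continuous_intros]:
  fixes f :: "'b::topological_space \<Rightarrow> 'a::topological_space ^ 'n"
  assumes "continuous_on S f" "continuous_on S g"
  shows "continuous_on S (\<lambda>x. vec_upd (f x) j (g x))"
  unfolding vec_upd_def
proof (intro continuous_on_vec_lambda)
  show "continuous_on S (\<lambda>x. if i = j then g x else f x $ i)" for i
    using assms by (cases "i = j") (auto intro!: continuous_intros)
qed

primrec iter_integral :: "'n list \<Rightarrow> (real ^ 'n \<Rightarrow> complex) \<Rightarrow> real ^ 'n \<Rightarrow> complex" where
  "iter_integral [] F th = F th"
| "iter_integral (j # js) F th = integral {0..1} (\<lambda>t. iter_integral js F (vec_upd th j t))"

lemma continuous_on_iter_integral:
  assumes "continuous_on UNIV F"
  shows "continuous_on UNIV (iter_integral js F)"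
proof (induction js)
  case Nil then show ?case using assms by simp
next
  case (Cons j js)
  have "continuous_on (UNIV \<times> cbox 0 1) (\<lambda>p. vec_upd (fst p) j (snd p))"
    by (auto intro!: continuous_intros)
  then have "continuous_on (UNIV \<times> cbox 0 1) (\<lambda>p. iter_integral js F (vec_upd (fst p) j (snd p)))"
    by (rule continuous_on_compose2[OF Cons]) auto
  then have "continuous_on (UNIV \<times> cbox 0 1) (\<lambda>(x, t). iter_integral js F (vec_upd x j t))"
    by (simp add: case_prod_unfold)
  from integral_continuous_on_param[OF this] show ?case
    by (simp add: cbox_interval)
qed

lemma iter_integral_integrable:
  assumes "continuous_on UNIV F"
  shows "(\<lambda>t. iter_integral js F (vec_upd th j t)) integrable_on {0..1}"
  by (rule integrable_continuous_real, rule continuous_on_compose2[OF continuous_on_iter_integral[OF assms]])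
     (auto intro!: continuous_intros)

lemma iter_integral_add:
  assumes "continuous_on UNIV F" "continuous_on UNIV G"
  shows "iter_integral js (\<lambda>x. F x + G x) th = iter_integral js F th + iter_integral js G th"
  by (induction js arbitrary: th)
     (simp_all add: integral_add[OF iter_integral_integrable[OF assms(1)] iter_integral_integrable[OF assms(2)]])

lemma iter_integral_mult_left: "iter_integral js (\<lambda>x. c * F x) th = c * iter_integral js F th"
  by (induction js arbitrary: th) simp_all

lemma iter_integral_sum:
  assumes "finite A" "\<And>a. a \<in> A \<Longrightarrow> continuous_on UNIV (F a)"
  shows "iter_integral js (\<lambda>x. \<Sum>a\<in>A. F a x) th = (\<Sum>a\<in>A. iter_integral js (F a) th)"
  using assms
proof (induction A rule: finite_induct)
  case empty
  then show ?case by (induction js arbitrary: th) simp_all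
next
  case (insert a A)
  then show ?case by (simp add: iter_integral_add continuous_on_sum)
qed

lemma norm_iter_integral_le:
  assumes "continuous_on UNIV F" "\<And>x. norm (F x) \<le> B"
  shows "norm (iter_integral js F th) \<le> B"
proof (induction js arbitrary: th)
  case Nil then show ?case using assms by simp
next
  case (Cons j js)
  have "norm (integral {0..1} (\<lambda>t. iter_integral js F (vec_upd th j t))) \<le> B * (1 - 0)"
    by (rule integral_bound)
       (auto intro!: Cons continuous_on_compose2[OF continuous_on_iter_integral[OF assms(1)]] continuous_intros)
  then show ?case by simp
qed

lemma iter_integral_cong:
  assumes "\<And>x. (\<forall>i. i \<notin> set js \<longrightarrow> x $ i = th $ i) \<Longrightarrow> F x = G x"
  shows "iter_integral js F th = iter_integral js G th"
  using assms
proof (induction js arbitrary: th)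
  case Nil then show ?case by simp
next
  case (Cons j js)
  have "iter_integral js F (vec_upd th j t) = iter_integral js G (vec_upd th j t)" for t
    by (rule Cons.IH) (use Cons.prems in auto)
  then show ?case by simp
qed

lemma iter_integral_mult_coordinate:
  assumes "j \<notin> set js"
  shows "iter_integral js (\<lambda>x. c (x $ j) * F x) th = c (th $ j) * iter_integral js F th"
  using assms by (induction js arbitrary: th) simp_all

lemma iter_integral_dominated_convergence:
  assumes "\<And>n. continuous_on UNIV (F n)" "continuous_on UNIV G"
    and "\<And>n x. norm (F n x) \<le> B" "\<And>x. (\<lambda>n. F n x) \<longlonglongrightarrow> G x"
  shows "(\<lambda>n. iter_integral js (F n) th) \<longlonglongrightarrow> iter_integral js G th"
proof (induction js arbitrary: th)
  case Nil then show ?case using assms by simp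
next
  case (Cons j js)
  show ?case unfolding iter_integral.simps
    by (rule dominated_convergence(2)[where h="\<lambda>_. B"])
       (auto intro!: iter_integral_integrable assms Cons norm_iter_integral_le)
qed

lemma iter_integral_prod:
  fixes f :: "'n::finite \<Rightarrow> real \<Rightarrow> complex"
  assumes "distinct js"
  shows "iter_integral js (\<lambda>th. \<Prod>i\<in>set js. f i (th $ i)) th0 = (\<Prod>i\<in>set js. integral {0..1} (f i))"
  using assms
proof (induction js arbitrary: th0)
  case Nil then show ?case by simp
next
  case (Cons j js)
  then have "j \<notin> set js" by simp
  with Cons show ?case
    using iter_integral_mult_coordinate[of j js "f j" "\<lambda>th. \<Prod>i\<in>set js. f i (th $ i)"] by simp
qed

definition coords :: "'n::finite list" where
  "coords = (SOME js. distinct js \<and> set js = UNIV)"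

lemma distinct_coords: "distinct (coords :: 'n::finite list)"
  and set_coords [simp]: "set (coords :: 'n::finite list) = UNIV"
proof -
  have "\<exists>js. distinct js \<and> set js = (UNIV :: 'n set)"
    using finite_distinct_list[of "UNIV :: 'n set"] by auto
  then show "distinct (coords :: 'n list)" "set (coords :: 'n list) = UNIV"
    unfolding coords_def by (metis (mono_tags, lifting) someI_ex)+
qed

abbreviation torus_integral :: "(real ^ 'n::finite \<Rightarrow> complex) \<Rightarrow> complex" where
  "torus_integral F \<equiv> iter_integral coords F 0"

lemma torus_integral_prod:
  fixes f :: "'n::finite \<Rightarrow> real \<Rightarrow> complex"
  shows "torus_integral (\<lambda>th. \<Prod>i\<in>UNIV. f i (th $ i)) = (\<Prod>i\<in>UNIV. integral {0..1} (f i))"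
  using iter_integral_prod[OF distinct_coords, of f 0] by simp

section \<open>The Cauchy formula on a polydisc\<close>

definition cis2pi :: "real \<Rightarrow> complex" where
  "cis2pi t = exp (2 * of_real pi * \<i> * of_real t)"

lemma norm_cis2pi [simp]: "norm (cis2pi t) = 1"
proof -
  have "cis2pi t = exp (\<i> * of_real (2 * pi * t))" by (simp add: cis2pi_def mult_ac)
  then show ?thesis by simp
qed

lemma cis2pi_mult_cnj: "cis2pi t * cnj (cis2pi t) = 1"
  using complex_norm_square[of "cis2pi t"] by simp

lemma continuous_on_cis2pi [continuous_intros]:
  "continuous_on S f \<Longrightarrow> continuous_on S (\<lambda>x. cis2pi (f x))"
  unfolding cis2pi_def by (auto intro!: continuous_intros)

text \<open>The Cauchy kernel with respect to the parameter \<open>t \<in> [0,1]\<close> of the circle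
  \<open>R cis2pi t\<close>; it includes the factor \<open>d\<zeta> / (2\<pi>i) = \<zeta> dt\<close>.\<close>

definition cauchy_kernel :: "real \<Rightarrow> complex \<Rightarrow> real \<Rightarrow> complex" where
  "cauchy_kernel R w t = of_real R * cis2pi t / (of_real R * cis2pi t - w)"

lemma circle_point_neq:
  assumes "cmod w < R"
  shows "of_real R * cis2pi t - w \<noteq> 0"
proof
  assume "of_real R * cis2pi t - w = 0"
  then have "cmod w = cmod (of_real R * cis2pi t)" by simp
  also have "\<dots> = \<bar>R\<bar>" by (simp add: norm_mult)
  finally show False using assms by simp
qed

lemma cauchy_integral_circle01:
  assumes contf: "continuous_on (cball 0 R) h" and holf: "h holomorphic_on ball 0 R"
    and w: "cmod w < R"
  shows "integral {0..1} (\<lambda>t. h (of_real R * cis2pi t) * cauchy_kernel R w t) = h w"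
proof -
  have "((\<lambda>u. h u / (u - w)) has_contour_integral (2 * of_real pi * \<i> * h w)) (circlepath 0 R)"
    using Cauchy_integral_circlepath[OF contf holf] w by simp
  then have "((\<lambda>t. (2 * of_real pi * \<i>) * (h (of_real R * cis2pi t) * cauchy_kernel R w t))
      has_integral (2 * of_real pi * \<i> * h w)) {0..1}"
    unfolding has_contour_integral_def
  proof (rule has_integral_eq[rotated])
    fix t :: real assume "t \<in> {0..1}"
    then have vd: "vector_derivative (circlepath 0 R) (at t within {0..1}) = 2 * pi * \<i> * (R * cis2pi t)"
      by (simp add: vector_derivative_circlepath01 cis2pi_def)
    have "circlepath 0 R t = R * cis2pi t"
      by (simp add: circlepath cis2pi_def)
    then show "h (circlepath 0 R t) / (circlepath 0 R t - w) * vector_derivative (circlepath 0 R) (at t within {0..1})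
        = 2 * of_real pi * \<i> * (h (of_real R * cis2pi t) * cauchy_kernel R w t)"
      unfolding vd cauchy_kernel_def by (simp add: divide_inverse ac_simps)
  qed
  then have "((\<lambda>t. h (of_real R * cis2pi t) * cauchy_kernel R w t) has_integral h w) {0..1}"
    by (simp add: has_integral_mult_right_iff)
  then show ?thesis by (rule integral_unique)
qed

definition cpolydisc :: "real \<Rightarrow> (complex ^ 'n) set" where
  "cpolydisc R = {z. \<forall>i. cmod (z $ i) \<le> R}"

lemma cpolydisc_mono: "R \<le> R' \<Longrightarrow> cpolydisc R \<subseteq> cpolydisc R'"
  unfolding cpolydisc_def by (auto intro: order_trans)

lemma ball_subset_cpolydisc: "ball 0 r \<subseteq> cpolydisc r"
proof
  fix z :: "complex ^ 'n" assume "z \<in> ball 0 r"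
  then show "z \<in> cpolydisc r"
    using Finite_Cartesian_Product.norm_nth_le[of z] by (auto simp: cpolydisc_def intro: order_trans less_imp_le)
qed

lemma norm_le_sum_norm_nth: "norm (x :: 'a::real_normed_vector ^ 'n) \<le> (\<Sum>i\<in>UNIV. norm (x $ i))"
  by (simp add: norm_vec_def L2_set_le_sum)

lemma norm_le_card_mult_radius:
  fixes z :: "complex ^ 'n"
  assumes "z \<in> cpolydisc R"
  shows "norm z \<le> real CARD('n) * R"
proof -
  have "(\<Sum>i\<in>UNIV. cmod (z $ i)) \<le> real CARD('n) * R"
    using sum_bounded_above[of UNIV "\<lambda>i. cmod (z $ i)" R] assms by (simp add: cpolydisc_def)
  then show ?thesis using norm_le_sum_norm_nth[of z] by linarith
qed

lemma compact_cpolydisc: "compact (cpolydisc R :: (complex ^ 'n) set)"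
proof (rule compact_eq_bounded_closed[THEN iffD2], intro conjI)
  show "bounded (cpolydisc R :: (complex ^ 'n) set)"
    unfolding bounded_iff using norm_le_card_mult_radius by blast
  show "closed (cpolydisc R :: (complex ^ 'n) set)"
    unfolding cpolydisc_def
    by (simp add: Collect_all_eq closed_INT closed_Collect_le continuous_on_component continuous_on_norm continuous_on_id)
qed

text \<open>Separate holomorphy and continuity are all that the iterated one-variable Cauchy
  formula uses.\<close>

definition polydisc_holomorphic :: "(complex ^ 'n \<Rightarrow> complex) \<Rightarrow> real \<Rightarrow> bool" where
  "polydisc_holomorphic g R \<longleftrightarrow> continuous_on (cpolydisc R) g \<and>
     (\<forall>w\<in>cpolydisc R. \<forall>j. (\<lambda>\<zeta>. g (vec_upd w j \<zeta>)) holomorphic_on ball 0 R)"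

lemma polydisc_holomorphic_slice:
  assumes "polydisc_holomorphic g R" "w \<in> cpolydisc R"
  shows "continuous_on (cball 0 R) (\<lambda>\<zeta>. g (vec_upd w j \<zeta>))"
    and "(\<lambda>\<zeta>. g (vec_upd w j \<zeta>)) holomorphic_on ball 0 R"
proof -
  have "(\<lambda>\<zeta>. vec_upd w j \<zeta>) ` cball 0 R \<subseteq> cpolydisc R"
    using assms(2) by (auto simp: cpolydisc_def)
  moreover have "continuous_on (cball 0 R) (\<lambda>\<zeta>. vec_upd w j \<zeta>)"
    by (auto intro!: continuous_intros)
  ultimately show "continuous_on (cball 0 R) (\<lambda>\<zeta>. g (vec_upd w j \<zeta>))"
    using assms(1) continuous_on_compose2 unfolding polydisc_holomorphic_def by blast
  show "(\<lambda>\<zeta>. g (vec_upd w j \<zeta>)) holomorphic_on ball 0 R"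
    using assms unfolding polydisc_holomorphic_def by blast
qed

lemma polydisc_holomorphic_bound:
  assumes "polydisc_holomorphic g R"
  obtains B where "B \<ge> 0" "\<And>w. w \<in> cpolydisc R \<Longrightarrow> norm (g w) \<le> B"
proof -
  have "compact (g ` cpolydisc R)"
    using assms compact_cpolydisc by (auto simp: polydisc_holomorphic_def intro: compact_continuous_image)
  then obtain B where "\<forall>x\<in>g ` cpolydisc R. norm x \<le> B"
    using compact_imp_bounded bounded_iff by metis
  then show ?thesis by (intro that[of "max B 0"]) fastforce+
qed

lemma bounded_linear_axis: "bounded_linear (axis j :: complex \<Rightarrow> complex ^ 'n)"
proof (rule bounded_linear_intro[where K=1])
  fix x y :: complex and r :: real
  show "axis j (x + y) = (axis j x + axis j y :: complex ^ 'n)"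
    and "axis j (r *\<^sub>R x) = (r *\<^sub>R axis j x :: complex ^ 'n)"
    by (simp_all add: axis_def vec_eq_iff)
  have "norm (axis j x :: complex ^ 'n) \<le> (\<Sum>i\<in>UNIV. norm ((axis j x :: complex ^ 'n) $ i))"
    by (rule norm_le_sum_norm_nth)
  also have "\<dots> = norm x" by (simp add: axis_def if_distrib cong: if_cong)
  finally show "norm (axis j x :: complex ^ 'n) \<le> norm x * 1" by simp
qed

lemma has_derivative_vec_upd:
  "(vec_upd w j has_derivative (axis j :: complex \<Rightarrow> complex ^ 'n)) (at \<zeta>)"
proof -
  have "vec_upd w j = (\<lambda>\<zeta>. axis j \<zeta> + vec_upd w j 0)"
    by (rule ext) (simp add: axis_def vec_eq_iff)
  moreover have "((\<lambda>\<zeta>. axis j \<zeta> + vec_upd w j 0) has_derivative axis j) (at \<zeta>)"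
    by (rule has_derivative_add_const, rule bounded_linear.has_derivative[OF bounded_linear_axis])
       (rule has_derivative_ident)
  ultimately show ?thesis by simp
qed

lemma holo_on_imp_polydisc_holomorphic:
  fixes g :: "complex ^ 'n \<Rightarrow> complex"
  assumes holo: "holo_on V g" and sub: "cpolydisc R \<subseteq> V"
  shows "polydisc_holomorphic g R"
proof -
  have "continuous_on V g"
    using holo has_derivative_continuous unfolding holo_on_def
    by (metis continuous_at_imp_continuous_on)
  moreover have "(\<lambda>\<zeta>. g (vec_upd w j \<zeta>)) field_differentiable at \<zeta>"
    if w: "w \<in> cpolydisc R" and \<zeta>: "\<zeta> \<in> ball 0 R" for w j \<zeta>
  proof -
    have "vec_upd w j \<zeta> \<in> V" using w \<zeta> sub by (auto simp: cpolydisc_def)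
    then obtain L where L: "(g has_derivative L) (at (vec_upd w j \<zeta>))"
        and clin: "\<And>(c::complex) v. L (c *s v) = c * L v"
      using holo unfolding holo_on_def by blast
    from has_derivative_compose[OF has_derivative_vec_upd L]
    have "((\<lambda>\<zeta>. g (vec_upd w j \<zeta>)) has_derivative (\<lambda>h. L (axis j h))) (at \<zeta>)"
      by (simp add: o_def)
    moreover have "(\<lambda>h. L (axis j h)) = (*) (L (axis j 1))"
    proof
      fix h
      have "axis j h = h *s (axis j 1 :: complex ^ 'n)" by (simp add: axis_def vec_eq_iff)
      then show "L (axis j h) = L (axis j 1) * h" using clin[of h "axis j 1"] by (simp add: mult.commute)
    qed
    ultimately show ?thesis
      unfolding field_differentiable_def has_field_derivative_def by auto
  qed
  ultimately show ?thesis
    unfolding polydisc_holomorphic_def using continuous_on_subset[OF _ sub]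
    by (auto simp: holomorphic_on_open field_differentiable_def)
qed

definition partial_torus :: "complex ^ 'n \<Rightarrow> 'n set \<Rightarrow> real \<Rightarrow> real ^ 'n \<Rightarrow> complex ^ 'n" where
  "partial_torus z J R th = (\<chi> i. if i \<in> J then of_real R * cis2pi (th $ i) else z $ i)"

lemma cauchy_integrand_insert:
  assumes "j \<notin> J" "x $ j = t"
  shows "g (partial_torus z (insert j J) R x) * (\<Prod>i\<in>insert j J. cauchy_kernel R (z $ i) (x $ i))
    = cauchy_kernel R (z $ j) (x $ j) * (g (partial_torus (vec_upd z j (of_real R * cis2pi t)) J R x) *
        (\<Prod>i\<in>J. cauchy_kernel R (vec_upd z j (of_real R * cis2pi t) $ i) (x $ i)))"
proof -
  have "partial_torus z (insert j J) R x = partial_torus (vec_upd z j (of_real R * cis2pi t)) J R x"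
    using assms(2) by (auto simp: partial_torus_def vec_eq_iff)
  moreover have "(\<Prod>i\<in>J. cauchy_kernel R (z $ i) (x $ i))
      = (\<Prod>i\<in>J. cauchy_kernel R (vec_upd z j (of_real R * cis2pi t) $ i) (x $ i))"
    using assms(1) by (intro prod.cong) auto
  ultimately show ?thesis using assms by (simp add: mult_ac)
qed

lemma cauchy_integral_iterated:
  fixes g :: "complex ^ 'n \<Rightarrow> complex"
  assumes g: "polydisc_holomorphic g R"
    and "distinct js" "z \<in> cpolydisc R" "\<forall>i\<in>set js. cmod (z $ i) < R"
  shows "iter_integral js (\<lambda>th. g (partial_torus z (set js) R th) *
            (\<Prod>i\<in>set js. cauchy_kernel R (z $ i) (th $ i))) th0 = g z"
  using assms(2-4)
proof (induction js arbitrary: z th0)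
  case Nil
  have "partial_torus z {} R th0 = z" by (simp add: partial_torus_def vec_eq_iff)
  then show ?case by simp
next
  case (Cons j js)
  let ?J = "set js"
  let ?F = "\<lambda>z th. g (partial_torus z ?J R th) * (\<Prod>i\<in>?J. cauchy_kernel R (z $ i) (th $ i))"
  let ?z = "\<lambda>t. vec_upd z j (of_real R * cis2pi t)"
  have jn: "j \<notin> ?J" and dj: "distinct js" using Cons.prems by auto
  have R: "R > 0" using Cons.prems by (auto intro: le_less_trans[OF norm_ge_zero])
  have "iter_integral js (\<lambda>th. g (partial_torus z (set (j # js)) R th) *
      (\<Prod>i\<in>set (j # js). cauchy_kernel R (z $ i) (th $ i))) (vec_upd th0 j t)
      = cauchy_kernel R (z $ j) t * g (?z t)" for t
  proof -
    have "iter_integral js (\<lambda>th. g (partial_torus z (set (j # js)) R th) *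
        (\<Prod>i\<in>set (j # js). cauchy_kernel R (z $ i) (th $ i))) (vec_upd th0 j t)
        = iter_integral js (\<lambda>th. cauchy_kernel R (z $ j) (th $ j) * ?F (?z t) th) (vec_upd th0 j t)"
      using jn by (intro iter_integral_cong, unfold list.set(2), rule cauchy_integrand_insert) auto
    also have "\<dots> = cauchy_kernel R (z $ j) t * iter_integral js (?F (?z t)) (vec_upd th0 j t)"
      using iter_integral_mult_coordinate[OF jn, of "cauchy_kernel R (z $ j)" "?F (?z t)" "vec_upd th0 j t"]
      by (simp only: vec_upd_nth simp_thms if_True)
    also have "iter_integral js (?F (?z t)) (vec_upd th0 j t) = g (?z t)"
      by (rule Cons.IH) (use dj Cons.prems R jn in \<open>auto simp: cpolydisc_def norm_mult\<close>)
    finally show ?thesis .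
  qed
  then have "iter_integral (j # js) (\<lambda>th. g (partial_torus z (set (j # js)) R th) *
      (\<Prod>i\<in>set (j # js). cauchy_kernel R (z $ i) (th $ i))) th0
      = integral {0..1} (\<lambda>t. g (?z t) * cauchy_kernel R (z $ j) t)"
    by (simp add: mult.commute)
  also have "\<dots> = g (vec_upd z j (z $ j))"
    using cauchy_integral_circle01[OF polydisc_holomorphic_slice[OF g Cons.prems(2)]] Cons.prems by simp
  finally show ?case by simp
qed

definition torus :: "real \<Rightarrow> real ^ 'n \<Rightarrow> complex ^ 'n" where
  "torus R th = (\<chi> i. of_real R * cis2pi (th $ i))"

lemma torus_in_cpolydisc: "R \<ge> 0 \<Longrightarrow> torus R th \<in> cpolydisc R"
  by (simp add: torus_def cpolydisc_def norm_mult)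

lemma continuous_on_torus [continuous_intros]:
  "continuous_on S f \<Longrightarrow> continuous_on S (\<lambda>x. torus R (f x))"
  unfolding torus_def by (auto intro!: continuous_intros)

lemma cauchy_integral_polydisc:
  fixes g :: "complex ^ 'n::finite \<Rightarrow> complex"
  assumes "polydisc_holomorphic g R" "\<forall>i. cmod (z $ i) < R"
  shows "torus_integral (\<lambda>th. g (torus R th) * (\<Prod>i\<in>UNIV. cauchy_kernel R (z $ i) (th $ i))) = g z"
proof -
  have "partial_torus z UNIV R = torus R"
    by (simp add: fun_eq_iff partial_torus_def torus_def)
  moreover have "z \<in> cpolydisc R" using assms(2) by (auto simp: cpolydisc_def less_imp_le)
  ultimately show ?thesis
    using cauchy_integral_iterated[OF assms(1) distinct_coords, of z 0] assms(2) by simp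
qed

lemma continuous_on_polydisc_holomorphic_torus:
  assumes "polydisc_holomorphic g R" "R \<ge> 0"
  shows "continuous_on UNIV (\<lambda>th. g (torus R th))"
  by (rule continuous_on_compose2[of "cpolydisc R" g])
     (use assms torus_in_cpolydisc in \<open>auto simp: polydisc_holomorphic_def intro!: continuous_intros\<close>)

section \<open>Taylor expansion on a polydisc\<close>

lemma cis2pi_power_mult_cnj_power:
  "cis2pi t ^ a * cnj (cis2pi t) ^ b = exp ((2 * of_real pi * \<i> * of_int (int a - int b)) * of_real t)"
proof -
  have "cis2pi t ^ a = exp (of_nat a * (2 * of_real pi * \<i> * of_real t))"
    unfolding cis2pi_def by (rule exp_of_nat_mult[symmetric])
  moreover have "cnj (cis2pi t) ^ b = exp (of_nat b * (- (2 * of_real pi * \<i> * of_real t)))"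
    unfolding cis2pi_def exp_cnj by (subst exp_of_nat_mult) simp
  ultimately show ?thesis
    by (simp add: exp_add[symmetric] algebra_simps)
qed

lemma integral_cis2pi_power_mult_cnj_power:
  "integral {0..1} (\<lambda>t. cis2pi t ^ a * cnj (cis2pi t) ^ b) = (if a = b then 1 else 0)"
proof (cases "a = b")
  case True
  then show ?thesis by (simp add: cis2pi_power_mult_cnj_power)
next
  case False
  define c where "c = 2 * of_real pi * \<i> * (of_int (int a - int b) :: complex)"
  have c: "c \<noteq> 0" using False by (simp add: c_def)
  have "((\<lambda>t. exp (c * of_real t)) has_integral
      ((\<lambda>u. exp (c * u) / c) (of_real 1) - (\<lambda>u. exp (c * u) / c) (of_real 0))) {0..1}"
  proof (rule fundamental_theorem_of_calculus)
    fix x :: real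
    have "((\<lambda>u. exp (c * u) / c) has_field_derivative exp (c * of_real x)) (at (of_real x))"
      using c by (auto intro!: derivative_eq_intros)
    then show "((\<lambda>t. (\<lambda>u. exp (c * u) / c) (of_real t)) has_vector_derivative exp (c * of_real x))
        (at x within {0..1})"
      by (rule has_vector_derivative_real_field)
  qed simp
  moreover have "exp c = 1"
    unfolding c_def using exp_integer_2pi[of "of_int (int a - int b)"] by (simp add: mult_ac)
  ultimately have "((\<lambda>t. exp (c * of_real t)) has_integral 0) {0..1}"
    by simp
  then show ?thesis using False
    by (simp add: cis2pi_power_mult_cnj_power c_def integral_unique)
qed

lemma torus_integral_orthogonal:
  "torus_integral (\<lambda>th. \<Prod>i\<in>UNIV. cis2pi (th $ i) ^ a i * cnj (cis2pi (th $ i)) ^ b i)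
     = (if a = b then 1 else 0)"
proof -
  have "torus_integral (\<lambda>th. \<Prod>i\<in>UNIV. cis2pi (th $ i) ^ a i * cnj (cis2pi (th $ i)) ^ b i)
      = (\<Prod>i\<in>UNIV. (if a i = b i then 1 else 0))"
    using torus_integral_prod[of "\<lambda>i t. cis2pi t ^ a i * cnj (cis2pi t) ^ b i"]
    by (simp add: integral_cis2pi_power_mult_cnj_power)
  also have "\<dots> = (if a = b then 1 else 0)"
    by (auto simp: fun_eq_iff)
  finally show ?thesis .
qed

definition index_box :: "nat \<Rightarrow> ('n \<Rightarrow> nat) set" where
  "index_box N = PiE UNIV (\<lambda>_. {..N})"

lemma finite_index_box [simp]: "finite (index_box N :: ('n::finite \<Rightarrow> nat) set)"
  unfolding index_box_def by (rule finite_PiE) auto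

lemma mem_index_box: "\<alpha> \<in> index_box N \<longleftrightarrow> (\<forall>i. \<alpha> i \<le> N)"
  unfolding index_box_def by (auto simp: PiE_iff)

lemma eventually_mem_index_box:
  fixes \<alpha> :: "'n::finite \<Rightarrow> nat"
  shows "eventually (\<lambda>N. \<alpha> \<in> index_box N) sequentially"
proof (rule eventually_sequentiallyI[of "Max (range \<alpha>)"])
  fix N assume "Max (range \<alpha>) \<le> N"
  moreover have "\<alpha> i \<le> Max (range \<alpha>)" for i by (rule Max_ge) auto
  ultimately show "\<alpha> \<in> index_box N" unfolding mem_index_box using le_trans by blast
qed

lemma prod_sum_index_box:
  fixes f :: "'n::finite \<Rightarrow> nat \<Rightarrow> 'a::comm_semiring_1"
  shows "(\<Prod>i\<in>UNIV. \<Sum>m\<le>N. f i m) = (\<Sum>\<alpha>\<in>index_box N. \<Prod>i\<in>UNIV. f i (\<alpha> i))"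
  unfolding index_box_def atMost_atLeast0 by (rule prod_sum_PiE) auto

lemma sum_power_half_le_2: "(\<Sum>m\<le>N. (1/2::real) ^ m) \<le> 2"
proof -
  have "(\<Sum>m\<le>N. (1/2::real) ^ m) \<le> (\<Sum>m. (1/2::real) ^ m)"
    by (rule sum_le_suminf) (auto intro: summable_geometric)
  also have "\<dots> = 2" using suminf_geometric[of "1/2::real"] by simp
  finally show ?thesis .
qed

lemma sum_power_from_le:
  fixes x :: real
  assumes "0 \<le> x" "x \<le> 1/2"
  shows "(\<Sum>m\<in>{b..N}. x ^ m) \<le> 2 * x ^ b"
proof (cases "b \<le> N")
  case True
  have "(\<Sum>m\<in>{b..N}. x ^ m) = x ^ b * (\<Sum>k\<le>N - b. x ^ k)"
    using True by (simp add: sum.atLeastAtMost_shift_0 power_add sum_distrib_left atLeast0AtMost)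
  also have "(\<Sum>k\<le>N - b. x ^ k) \<le> (\<Sum>k\<le>N - b. (1/2) ^ k)"
    using assms by (intro sum_mono power_mono) auto
  then have "x ^ b * (\<Sum>k\<le>N - b. x ^ k) \<le> x ^ b * 2"
    using sum_power_half_le_2[of "N - b"] assms by (intro mult_left_mono) auto
  finally show ?thesis by simp
qed (use assms in simp)

lemma sum_index_box_above_le:
  fixes x :: "'n::finite \<Rightarrow> real"
  assumes "\<And>i. 0 \<le> x i" "\<And>i. x i \<le> 1/2"
  shows "(\<Sum>\<alpha>\<in>{\<alpha>\<in>index_box N. \<forall>i. \<beta> i \<le> \<alpha> i}. \<Prod>i\<in>UNIV. x i ^ \<alpha> i)
    \<le> 2 ^ CARD('n) * (\<Prod>i\<in>UNIV. x i ^ \<beta> i)"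
proof -
  have "{\<alpha>\<in>index_box N. \<forall>i. \<beta> i \<le> \<alpha> i} = PiE UNIV (\<lambda>i. {\<beta> i..N})"
    by (auto simp: index_box_def PiE_iff)
  then have "(\<Sum>\<alpha>\<in>{\<alpha>\<in>index_box N. \<forall>i. \<beta> i \<le> \<alpha> i}. \<Prod>i\<in>UNIV. x i ^ \<alpha> i)
      = (\<Prod>i\<in>UNIV. \<Sum>m\<in>{\<beta> i..N}. x i ^ m)"
    by (simp add: prod_sum_PiE)
  also have "\<dots> \<le> (\<Prod>i\<in>UNIV. 2 * x i ^ \<beta> i)"
    using assms by (intro prod_mono conjI sum_nonneg sum_power_from_le) auto
  also have "\<dots> = 2 ^ CARD('n) * (\<Prod>i\<in>UNIV. x i ^ \<beta> i)"
    by (simp add: prod.distrib)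
  finally show ?thesis .
qed

lemma norm_sum_power_le_2:
  fixes q :: "'a::real_normed_div_algebra"
  assumes "norm q \<le> 1/2"
  shows "norm (\<Sum>m\<le>N. q ^ m) \<le> 2"
proof -
  have "norm (\<Sum>m\<le>N. q ^ m) \<le> (\<Sum>m\<le>N. (1/2::real) ^ m)"
    by (rule order_trans[OF norm_sum sum_mono]) (use assms in \<open>auto simp: norm_power intro: power_mono\<close>)
  then show ?thesis using sum_power_half_le_2[of N] by linarith
qed

lemma cauchy_kernel_geometric:
  assumes "R > 0" "cmod w \<le> R / 2"
  shows "(\<lambda>N. \<Sum>m\<le>N. (w / of_real R * cnj (cis2pi t)) ^ m) \<longlonglongrightarrow> cauchy_kernel R w t"
proof -
  let ?q = "w / of_real R * cnj (cis2pi t)"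
  have "cmod ?q < 1"
    using assms by (simp add: norm_mult norm_divide field_simps)
  then have "(\<lambda>n. ?q ^ n) sums (1 / (1 - ?q))" by (rule geometric_sums)
  then have "(\<lambda>n. \<Sum>m<Suc n. ?q ^ m) \<longlonglongrightarrow> 1 / (1 - ?q)"
    unfolding sums_def by (rule LIMSEQ_Suc)
  moreover have "cauchy_kernel R w t = 1 / (1 - ?q)"
  proof -
    have "(1 - ?q) * (of_real R * cis2pi t) = of_real R * cis2pi t - w * (cis2pi t * cnj (cis2pi t))"
      using assms by (simp add: field_simps)
    also have "\<dots> = of_real R * cis2pi t - w" by (simp add: cis2pi_mult_cnj)
    finally have eq: "(1 - ?q) * (of_real R * cis2pi t) = of_real R * cis2pi t - w" .
    show ?thesis
      using circle_point_neq[of w R t] assms unfolding cauchy_kernel_def by (simp add: eq[symmetric])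
  qed
  ultimately show ?thesis by (simp add: lessThan_Suc_atMost)
qed

definition taylor_coeff :: "(complex ^ 'n \<Rightarrow> complex) \<Rightarrow> real \<Rightarrow> ('n::finite \<Rightarrow> nat) \<Rightarrow> complex" where
  "taylor_coeff g R \<alpha> = (\<Prod>i\<in>UNIV. (1 / of_real R) ^ \<alpha> i) *
     torus_integral (\<lambda>th. g (torus R th) * (\<Prod>i\<in>UNIV. cnj (cis2pi (th $ i)) ^ \<alpha> i))"

lemma norm_monomial: "norm (monomial \<alpha> z) = (\<Prod>i\<in>UNIV. cmod (z $ i) ^ \<alpha> i)"
  by (simp add: monomial_def prod_norm[symmetric] norm_power)

lemma norm_taylor_term_le:
  assumes g: "polydisc_holomorphic g R" and R: "R > 0"
    and B: "\<And>w. w \<in> cpolydisc R \<Longrightarrow> norm (g w) \<le> B"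
  shows "norm (taylor_coeff g R \<alpha> * monomial \<alpha> z) \<le> B * (\<Prod>i\<in>UNIV. (cmod (z $ i) / R) ^ \<alpha> i)"
proof -
  have "norm (torus_integral (\<lambda>th. g (torus R th) * (\<Prod>i\<in>UNIV. cnj (cis2pi (th $ i)) ^ \<alpha> i))) \<le> B"
    using continuous_on_polydisc_holomorphic_torus[OF g] R B[OF torus_in_cpolydisc]
    by (intro norm_iter_integral_le)
       (auto intro!: continuous_intros simp: norm_mult prod_norm[symmetric] norm_power)
  moreover have norm_factor: "norm (\<Prod>i\<in>UNIV. (1 / of_real R :: complex) ^ \<alpha> i) = (\<Prod>i\<in>UNIV. (1 / R) ^ \<alpha> i)"
    using R by (simp add: prod_norm[symmetric] norm_power norm_divide)
  ultimately have "norm (taylor_coeff g R \<alpha>) \<le> (\<Prod>i\<in>UNIV. (1 / R) ^ \<alpha> i) * B"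
    using R unfolding taylor_coeff_def norm_mult norm_factor by (intro mult_left_mono) (auto simp: prod_nonneg)
  then have "norm (taylor_coeff g R \<alpha> * monomial \<alpha> z)
      \<le> B * (\<Prod>i\<in>UNIV. (1 / R) ^ \<alpha> i) * (\<Prod>i\<in>UNIV. cmod (z $ i) ^ \<alpha> i)"
    unfolding norm_mult norm_monomial by (intro mult_right_mono) (auto simp: mult.commute prod_nonneg)
  also have "\<dots> = B * (\<Prod>i\<in>UNIV. (cmod (z $ i) / R) ^ \<alpha> i)"
    unfolding mult.assoc prod.distrib[symmetric] power_mult_distrib[symmetric] by simp
  finally show ?thesis .
qed

lemma taylor_partial_sum_eq_torus_integral:
  fixes g :: "complex ^ 'n::finite \<Rightarrow> complex"
  assumes g: "polydisc_holomorphic g R" and R: "R > 0"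
  shows "(\<Sum>\<alpha>\<in>index_box N. taylor_coeff g R \<alpha> * monomial \<alpha> z) = torus_integral (\<lambda>th. g (torus R th) *
           (\<Prod>i\<in>UNIV. \<Sum>m\<le>N. (z $ i / of_real R * cnj (cis2pi (th $ i))) ^ m))"
proof -
  define H where "H \<alpha> th = g (torus R th) * (\<Prod>i\<in>UNIV. cnj (cis2pi (th $ i)) ^ \<alpha> i)" for \<alpha> th
  have "continuous_on UNIV (H \<alpha>)" for \<alpha>
    unfolding H_def using continuous_on_polydisc_holomorphic_torus[OF g] R by (auto intro!: continuous_intros)
  then have "torus_integral (\<lambda>th. \<Sum>\<alpha>\<in>index_box N. (\<Prod>i\<in>UNIV. (z $ i / of_real R) ^ \<alpha> i) * H \<alpha> th)
      = (\<Sum>\<alpha>\<in>index_box N. (\<Prod>i\<in>UNIV. (z $ i / of_real R) ^ \<alpha> i) * torus_integral (H \<alpha>))"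
    by (simp add: iter_integral_sum iter_integral_mult_left continuous_intros)
  also have "\<dots> = (\<Sum>\<alpha>\<in>index_box N. taylor_coeff g R \<alpha> * monomial \<alpha> z)"
  proof (rule sum.cong[OF refl])
    fix \<alpha> :: "'n \<Rightarrow> nat"
    have "(\<Prod>i\<in>UNIV. (z $ i / of_real R) ^ \<alpha> i) = (\<Prod>i\<in>UNIV. (1 / of_real R) ^ \<alpha> i) * monomial \<alpha> z"
      unfolding monomial_def prod.distrib[symmetric] power_mult_distrib[symmetric] by (simp add: field_simps)
    then show "(\<Prod>i\<in>UNIV. (z $ i / of_real R) ^ \<alpha> i) * torus_integral (H \<alpha>) = taylor_coeff g R \<alpha> * monomial \<alpha> z"
      unfolding taylor_coeff_def H_def by (simp add: mult_ac)
  qed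
  finally show ?thesis
    unfolding H_def prod_sum_index_box sum_distrib_left power_mult_distrib prod.distrib
    by (simp add: mult_ac)
qed

lemma taylor_expansion_polydisc:
  fixes g :: "complex ^ 'n::finite \<Rightarrow> complex"
  assumes g: "polydisc_holomorphic g R" and R: "R > 0" and z: "z \<in> cpolydisc (R/2)"
  shows "(\<lambda>N. \<Sum>\<alpha>\<in>index_box N. taylor_coeff g R \<alpha> * monomial \<alpha> z) \<longlonglongrightarrow> g z"
proof -
  obtain B where B: "B \<ge> 0" "\<And>w. w \<in> cpolydisc R \<Longrightarrow> norm (g w) \<le> B"
    using polydisc_holomorphic_bound[OF g] by blast
  have zR: "cmod (z $ i) \<le> R/2" for i using z by (simp add: cpolydisc_def)
  define q where "q i th = z $ i / of_real R * cnj (cis2pi (th $ i))" for i th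
  define K where "K th = (\<Prod>i\<in>UNIV. cauchy_kernel R (z $ i) (th $ i))" for th
  define F where "F N th = g (torus R th) * (\<Prod>i\<in>UNIV. \<Sum>m\<le>N. q i th ^ m)" for N th
  have zlt: "cmod (z $ i) < R" for i using zR[of i] R by linarith
  then have gz: "torus_integral (\<lambda>th. g (torus R th) * K th) = g z"
    unfolding K_def using cauchy_integral_polydisc[OF g] by simp
  have cont_g: "continuous_on UNIV (\<lambda>th. g (torus R th))"
    using continuous_on_polydisc_holomorphic_torus[OF g] R by simp
  have cont_K: "continuous_on UNIV (\<lambda>th. g (torus R th) * K th)"
    unfolding K_def cauchy_kernel_def using cont_g circle_point_neq[OF zlt]
    by (auto intro!: continuous_intros)
  have cont_F: "continuous_on UNIV (F N)" for N
    unfolding F_def q_def using cont_g R by (auto intro!: continuous_intros)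
  have bound_F: "norm (F N th) \<le> B * 2 ^ CARD('n)" for N th
  proof -
    have "norm (q i th) \<le> 1/2" for i
      using zR[of i] R by (simp add: q_def norm_mult norm_divide field_simps)
    have "norm (F N th) = norm (g (torus R th)) * (\<Prod>i\<in>UNIV. norm (\<Sum>m\<le>N. q i th ^ m))"
      unfolding F_def norm_mult prod_norm ..
    also have "\<dots> \<le> B * (\<Prod>i\<in>(UNIV::'n set). 2)"
      by (intro mult_mono prod_mono conjI B torus_in_cpolydisc norm_sum_power_le_2)
         (use R B \<open>\<And>i. norm (q i th) \<le> 1/2\<close> in \<open>auto intro: prod_nonneg\<close>)
    finally show ?thesis by simp
  qed
  have "(\<lambda>N. F N th) \<longlonglongrightarrow> g (torus R th) * K th" for th
    unfolding F_def K_def q_def by (intro tendsto_mult_left tendsto_prod cauchy_kernel_geometric R zR)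
  from iter_integral_dominated_convergence[OF cont_F cont_K bound_F this, of coords 0]
  show ?thesis
    unfolding gz F_def q_def taylor_partial_sum_eq_torus_integral[OF g R] .
qed
section \<open>Taylor terms as Fourier coefficients on torus orbits\<close>

definition torus_action :: "real ^ 'n \<Rightarrow> complex ^ 'n \<Rightarrow> complex ^ 'n" where
  "torus_action th z = (\<chi> i. cis2pi (th $ i) * z $ i)"

lemma torus_action_in_cpolydisc: "z \<in> cpolydisc R \<Longrightarrow> torus_action th z \<in> cpolydisc R"
  by (simp add: torus_action_def cpolydisc_def norm_mult)

lemma continuous_on_torus_action [continuous_intros]:
  "continuous_on S f \<Longrightarrow> continuous_on S (\<lambda>x. torus_action (f x) z)"
  unfolding torus_action_def by (auto intro!: continuous_intros)

lemma monomial_torus_action: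
  "monomial \<alpha> (torus_action th z) = monomial \<alpha> z * (\<Prod>i\<in>UNIV. cis2pi (th $ i) ^ \<alpha> i)"
  by (simp add: monomial_def torus_action_def power_mult_distrib prod.distrib mult_ac)

lemma torus_action_eq_cis: "torus_action th z = (\<chi> i. cis (2 * pi * th $ i) * z $ i)"
  by (simp add: torus_action_def cis2pi_def cis_conv_exp mult_ac)

lemma norm_taylor_partial_sum_le:
  fixes g :: "complex ^ 'n::finite \<Rightarrow> complex"
  assumes g: "polydisc_holomorphic g R" and R: "R > 0"
    and B: "\<And>w. w \<in> cpolydisc R \<Longrightarrow> norm (g w) \<le> B" "B \<ge> 0"
    and w: "w \<in> cpolydisc (R/2)"
  shows "norm (\<Sum>\<alpha>\<in>index_box N. taylor_coeff g R \<alpha> * monomial \<alpha> w) \<le> B * 2 ^ CARD('n)"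
proof -
  have "norm (\<Sum>\<alpha>\<in>index_box N. taylor_coeff g R \<alpha> * monomial \<alpha> w)
      \<le> (\<Sum>\<alpha>\<in>index_box N. B * (\<Prod>i\<in>UNIV. (cmod (w $ i) / R) ^ \<alpha> i))"
    by (rule order_trans[OF norm_sum sum_mono]) (rule norm_taylor_term_le[OF g R B(1)])
  also have "\<dots> = B * (\<Sum>\<alpha>\<in>{\<alpha>\<in>index_box N. \<forall>i. 0 \<le> \<alpha> i}. \<Prod>i\<in>UNIV. (cmod (w $ i) / R) ^ \<alpha> i)"
    by (simp add: sum_distrib_left)
  also have "\<dots> \<le> B * (2 ^ CARD('n) * (\<Prod>i\<in>UNIV. (cmod (w $ i) / R) ^ 0))"
    using w R by (intro mult_left_mono sum_index_box_above_le B(2)) (auto simp: cpolydisc_def field_simps)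
  finally show ?thesis by simp
qed

lemma torus_integral_fourier_coefficient:
  fixes a :: "('n::finite \<Rightarrow> nat) \<Rightarrow> complex"
  assumes "finite A"
  shows "torus_integral (\<lambda>th. (\<Sum>\<alpha>\<in>A. a \<alpha> * (\<Prod>i\<in>UNIV. cis2pi (th $ i) ^ \<alpha> i)) *
           (\<Prod>i\<in>UNIV. cnj (cis2pi (th $ i)) ^ \<beta> i)) = (if \<beta> \<in> A then a \<beta> else 0)"
proof -
  have "torus_integral (\<lambda>th. (\<Sum>\<alpha>\<in>A. a \<alpha> * (\<Prod>i\<in>UNIV. cis2pi (th $ i) ^ \<alpha> i)) *
      (\<Prod>i\<in>UNIV. cnj (cis2pi (th $ i)) ^ \<beta> i))
      = torus_integral (\<lambda>th. \<Sum>\<alpha>\<in>A. a \<alpha> * (\<Prod>i\<in>UNIV. cis2pi (th $ i) ^ \<alpha> i * cnj (cis2pi (th $ i)) ^ \<beta> i))"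
    by (simp add: sum_distrib_right prod.distrib mult.assoc)
  also have "\<dots> = (\<Sum>\<alpha>\<in>A. a \<alpha> * (if \<alpha> = \<beta> then 1 else 0))"
    using assms by (simp add: iter_integral_sum iter_integral_mult_left torus_integral_orthogonal continuous_intros)
  also have "\<dots> = (if \<beta> \<in> A then a \<beta> else 0)"
    using assms by (simp add: if_distrib[of "\<lambda>x. _ * x"] cong: if_cong)
  finally show ?thesis .
qed

lemma torus_integral_torus_action:
  fixes g :: "complex ^ 'n::finite \<Rightarrow> complex"
  assumes g: "polydisc_holomorphic g R" and R: "R > 0" and z: "z \<in> cpolydisc (R/2)"
  shows "torus_integral (\<lambda>th. g (torus_action th z) * (\<Prod>i\<in>UNIV. cnj (cis2pi (th $ i)) ^ \<beta> i))
       = taylor_coeff g R \<beta> * monomial \<beta> z"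
proof -
  obtain B where B: "B \<ge> 0" "\<And>w. w \<in> cpolydisc R \<Longrightarrow> norm (g w) \<le> B"
    using polydisc_holomorphic_bound[OF g] by blast
  have z': "z \<in> cpolydisc R" using z R cpolydisc_mono[of "R/2" R] by auto
  define C where "C th = (\<Prod>i\<in>UNIV. cnj (cis2pi (th $ i)) ^ \<beta> i)" for th
  define G where "G N = (\<lambda>th. (\<Sum>\<alpha>\<in>index_box N. taylor_coeff g R \<alpha> * monomial \<alpha> (torus_action th z)) * C th)" for N
  have norm_C: "norm (C th) = 1" for th
    by (simp add: C_def prod_norm[symmetric] norm_power)
  have "continuous_on UNIV (\<lambda>th. g (torus_action th z))"
    by (rule continuous_on_compose2[of "cpolydisc R" g])
       (use g torus_action_in_cpolydisc z' in \<open>auto simp: polydisc_holomorphic_def intro!: continuous_intros\<close>)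
  then have cont_lim: "continuous_on UNIV (\<lambda>th. g (torus_action th z) * C th)"
    unfolding C_def by (auto intro!: continuous_intros)
  have cont_G: "continuous_on UNIV (G N)" for N
    unfolding G_def C_def monomial_def by (auto intro!: continuous_intros)
  have bound_G: "norm (G N th) \<le> B * 2 ^ CARD('n)" for N th
    unfolding G_def norm_mult norm_C
    using norm_taylor_partial_sum_le[OF g R B(2,1) torus_action_in_cpolydisc[OF z]] by simp
  have "(\<lambda>N. G N th) \<longlonglongrightarrow> g (torus_action th z) * C th" for th
    unfolding G_def by (intro tendsto_mult_right taylor_expansion_polydisc[OF g R torus_action_in_cpolydisc[OF z]])
  from iter_integral_dominated_convergence[OF cont_G cont_lim bound_G this, of coords 0]
  have lim: "(\<lambda>N. torus_integral (G N)) \<longlonglongrightarrow> torus_integral (\<lambda>th. g (torus_action th z) * C th)" .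
  have integral_G: "torus_integral (G N) = (if \<beta> \<in> index_box N then taylor_coeff g R \<beta> * monomial \<beta> z else 0)" for N
    using torus_integral_fourier_coefficient[OF finite_index_box, of "\<lambda>\<alpha>. taylor_coeff g R \<alpha> * monomial \<alpha> z" N \<beta>]
    unfolding G_def C_def monomial_torus_action mult.assoc[symmetric] .
  have "eventually (\<lambda>N. torus_integral (G N) = taylor_coeff g R \<beta> * monomial \<beta> z) sequentially"
    by (rule eventually_mono[OF eventually_mem_index_box[of \<beta>]]) (simp add: integral_G)
  then have "(\<lambda>N. torus_integral (G N)) \<longlonglongrightarrow> taylor_coeff g R \<beta> * monomial \<beta> z"
    by (rule tendsto_eventually)
  from LIMSEQ_unique[OF lim this] show ?thesis by (simp add: C_def)
qed

lemma norm_taylor_term_le_orbit_bound: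
  fixes g :: "complex ^ 'n::finite \<Rightarrow> complex"
  assumes g: "polydisc_holomorphic g R" and R: "R > 0" and z: "z \<in> cpolydisc (R/2)"
    and D: "\<And>th. norm (g (torus_action th z)) \<le> D"
  shows "norm (taylor_coeff g R \<beta> * monomial \<beta> z) \<le> D"
proof -
  have z': "z \<in> cpolydisc R" using z R cpolydisc_mono[of "R/2" R] by auto
  have "continuous_on UNIV (\<lambda>th. g (torus_action th z))"
    by (rule continuous_on_compose2[of "cpolydisc R" g])
       (use g torus_action_in_cpolydisc z' in \<open>auto simp: polydisc_holomorphic_def intro!: continuous_intros\<close>)
  then have "norm (torus_integral (\<lambda>th. g (torus_action th z) * (\<Prod>i\<in>UNIV. cnj (cis2pi (th $ i)) ^ \<beta> i))) \<le> D"
    using D by (intro norm_iter_integral_le)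
      (auto intro!: continuous_intros simp: norm_mult prod_norm[symmetric] norm_power)
  then show ?thesis using torus_integral_torus_action[OF g R z] by simp
qed

section \<open>Comparison with the minimal monomials\<close>

lemma dickson_lemma_on:
  fixes A :: "('n \<Rightarrow> nat) set"
  assumes "finite J"
  shows "\<exists>M. finite M \<and> M \<subseteq> A \<and> (\<forall>\<alpha>\<in>A. \<exists>\<beta>\<in>M. \<forall>i\<in>J. \<beta> i \<le> \<alpha> i)"
  using assms
proof (induction J arbitrary: A rule: finite_induct)
  case empty
  show ?case by (rule exI[of _ "A \<inter> {SOME a. a \<in> A}"]) (auto simp: some_in_eq)
next
  case (insert j J)
  obtain M0 where M0: "finite M0" "M0 \<subseteq> A" "\<forall>\<alpha>\<in>A. \<exists>\<beta>\<in>M0. \<forall>i\<in>J. \<beta> i \<le> \<alpha> i"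
    using insert.IH[of A] by blast
  txt \<open>Elements of \<open>A\<close> not dominated in the coordinate \<open>j\<close> by their witness in \<open>M0\<close>
    have \<open>j\<close>-th entry below \<open>N\<close>; those with a fixed \<open>j\<close>-th entry are handled by the
    induction hypothesis for the corresponding slice of \<open>A\<close>.\<close>
  have "\<forall>v. \<exists>Mv. finite Mv \<and> Mv \<subseteq> {\<alpha>\<in>A. \<alpha> j = v} \<and>
      (\<forall>\<alpha>\<in>{\<alpha>\<in>A. \<alpha> j = v}. \<exists>\<beta>\<in>Mv. \<forall>i\<in>J. \<beta> i \<le> \<alpha> i)"
    using insert.IH by blast
  from choice[OF this] obtain Mf where Mf: "\<forall>v. finite (Mf v) \<and> Mf v \<subseteq> {\<alpha>\<in>A. \<alpha> j = v} \<and>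
      (\<forall>\<alpha>\<in>{\<alpha>\<in>A. \<alpha> j = v}. \<exists>\<beta>\<in>Mf v. \<forall>i\<in>J. \<beta> i \<le> \<alpha> i)"
    by blast
  define N where "N = Max (insert 0 ((\<lambda>\<beta>. \<beta> j) ` M0))"
  have N: "\<beta> j \<le> N" if "\<beta> \<in> M0" for \<beta>
    unfolding N_def using M0(1) that by (intro Max_ge) auto
  define M where "M = M0 \<union> (\<Union>v<N. Mf v)"
  have "\<exists>\<beta>\<in>M. \<forall>i\<in>insert j J. \<beta> i \<le> \<alpha> i" if \<alpha>: "\<alpha> \<in> A" for \<alpha>
  proof -
    obtain \<beta> where \<beta>: "\<beta> \<in> M0" "\<forall>i\<in>J. \<beta> i \<le> \<alpha> i" using M0(3) \<alpha> by blast
    show ?thesis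
    proof (cases "\<beta> j \<le> \<alpha> j")
      case True
      then show ?thesis using \<beta> unfolding M_def by blast
    next
      case False
      then have "\<alpha> j < N" using N[OF \<beta>(1)] by linarith
      moreover obtain \<beta>' where "\<beta>' \<in> Mf (\<alpha> j)" "\<forall>i\<in>J. \<beta>' i \<le> \<alpha> i"
        using Mf \<alpha> by blast
      moreover have "\<beta>' j = \<alpha> j" using Mf \<open>\<beta>' \<in> Mf (\<alpha> j)\<close> by blast
      ultimately show ?thesis unfolding M_def by (intro bexI[of _ \<beta>']) auto
    qed
  qed
  moreover have "finite M" "M \<subseteq> A" unfolding M_def using M0(1,2) Mf by auto
  ultimately show ?case by blast
qed

lemma dickson_lemma:
  fixes A :: "('n::finite \<Rightarrow> nat) set"
  obtains M where "finite M" "M \<subseteq> A" "\<And>\<alpha>. \<alpha> \<in> A \<Longrightarrow> \<exists>\<beta>\<in>M. \<forall>i. \<beta> i \<le> \<alpha> i"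
  using dickson_lemma_on[of "UNIV::'n set" A] by auto

lemma norm_taylor_partial_sum_le_dominated:
  fixes g :: "complex ^ 'n::finite \<Rightarrow> complex"
  assumes g: "polydisc_holomorphic g R" and R: "R > 0"
    and B: "\<And>w. w \<in> cpolydisc R \<Longrightarrow> norm (g w) \<le> B" "B \<ge> 0"
    and M: "finite M" "\<And>\<alpha>. taylor_coeff g R \<alpha> \<noteq> 0 \<Longrightarrow> \<exists>\<beta>\<in>M. \<forall>i. \<beta> i \<le> \<alpha> i"
    and z: "z \<in> cpolydisc (R/2)"
  shows "norm (\<Sum>\<alpha>\<in>index_box N. taylor_coeff g R \<alpha> * monomial \<alpha> z)
    \<le> B * 2 ^ CARD('n) * (\<Sum>\<beta>\<in>M. \<Prod>i\<in>UNIV. (cmod (z $ i) / R) ^ \<beta> i)"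
proof -
  define x where "x i = cmod (z $ i) / R" for i
  have x: "0 \<le> x i" "x i \<le> 1/2" for i
    using z R by (auto simp: x_def cpolydisc_def field_simps)
  define T where "T \<alpha> = (\<Prod>i\<in>UNIV. x i ^ \<alpha> i)" for \<alpha>
  have T: "T \<alpha> \<ge> 0" for \<alpha> unfolding T_def using x by (simp add: prod_nonneg)
  define D where "D \<alpha> = (\<Sum>\<beta>\<in>M. if \<forall>i. \<beta> i \<le> \<alpha> i then B * T \<alpha> else 0)" for \<alpha>
  have term_le: "norm (taylor_coeff g R \<alpha> * monomial \<alpha> z) \<le> D \<alpha>" for \<alpha>
  proof (cases "taylor_coeff g R \<alpha> = 0")
    case True
    then show ?thesis unfolding D_def using B(2) T by (simp add: sum_nonneg)
  next
    case False
    then obtain \<beta> where \<beta>: "\<beta> \<in> M" "\<forall>i. \<beta> i \<le> \<alpha> i" using M(2) by blast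
    have "norm (taylor_coeff g R \<alpha> * monomial \<alpha> z) \<le> B * T \<alpha>"
      unfolding T_def x_def by (rule norm_taylor_term_le[OF g R B(1)])
    also have "\<dots> = (if \<forall>i. \<beta> i \<le> \<alpha> i then B * T \<alpha> else 0)" using \<beta>(2) by simp
    also have "\<dots> \<le> D \<alpha>"
      unfolding D_def by (rule member_le_sum) (use \<beta>(1) B(2) T M(1) in auto)
    finally show ?thesis .
  qed
  have "norm (\<Sum>\<alpha>\<in>index_box N. taylor_coeff g R \<alpha> * monomial \<alpha> z) \<le> (\<Sum>\<alpha>\<in>index_box N. D \<alpha>)"
    by (rule order_trans[OF norm_sum sum_mono[OF term_le]])
  also have "\<dots> = (\<Sum>\<beta>\<in>M. B * (\<Sum>\<alpha>\<in>{\<alpha>\<in>index_box N. \<forall>i. \<beta> i \<le> \<alpha> i}. T \<alpha>))"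
    unfolding D_def by (subst sum.swap) (simp add: sum.inter_filter sum_distrib_left if_distrib[of "\<lambda>x. B * x"] cong: if_cong)
  also have "\<dots> \<le> (\<Sum>\<beta>\<in>M. B * (2 ^ CARD('n) * T \<beta>))"
    unfolding T_def by (intro sum_mono mult_left_mono B(2) sum_index_box_above_le x)
  also have "\<dots> = B * 2 ^ CARD('n) * (\<Sum>\<beta>\<in>M. T \<beta>)"
    by (simp add: sum_distrib_left sum_distrib_right mult_ac)
  finally show ?thesis unfolding T_def x_def .
qed

lemma sum_scaled_monomials_le:
  fixes z :: "complex ^ 'n::finite"
  assumes "finite M" "R > 0"
  shows "(\<Sum>\<beta>\<in>M. \<Prod>i\<in>UNIV. (cmod (z $ i) / R) ^ \<beta> i)
    \<le> (\<Sum>\<beta>\<in>M. \<Prod>i\<in>UNIV. (1 / R) ^ \<beta> i) * (\<Sum>\<beta>\<in>M. norm (monomial \<beta> z))"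
proof -
  have "(\<Sum>\<beta>\<in>M. \<Prod>i\<in>UNIV. (cmod (z $ i) / R) ^ \<beta> i)
      = (\<Sum>\<beta>\<in>M. (\<Prod>i\<in>UNIV. (1 / R) ^ \<beta> i) * norm (monomial \<beta> z))"
    unfolding norm_monomial prod.distrib[symmetric] power_mult_distrib[symmetric] by simp
  also have "\<dots> \<le> (\<Sum>\<beta>\<in>M. (\<Sum>\<gamma>\<in>M. \<Prod>i\<in>UNIV. (1 / R) ^ \<gamma> i) * norm (monomial \<beta> z))"
  proof (rule sum_mono, rule mult_right_mono)
    show "(\<Prod>i\<in>UNIV. (1 / R) ^ \<beta> i) \<le> (\<Sum>\<gamma>\<in>M. \<Prod>i\<in>UNIV. (1 / R) ^ \<gamma> i)" if "\<beta> \<in> M" for \<beta>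
      using assms that by (intro member_le_sum) (auto intro: prod_nonneg)
  qed simp
  finally show ?thesis by (simp add: sum_distrib_left)
qed

lemma norm_le_sum_dominated_monomials:
  fixes g :: "complex ^ 'n::finite \<Rightarrow> complex"
  assumes g: "polydisc_holomorphic g R" and R: "R > 0"
    and B: "\<And>w. w \<in> cpolydisc R \<Longrightarrow> norm (g w) \<le> B" "B \<ge> 0"
    and M: "finite M" "\<And>\<alpha>. taylor_coeff g R \<alpha> \<noteq> 0 \<Longrightarrow> \<exists>\<beta>\<in>M. \<forall>i. \<beta> i \<le> \<alpha> i"
    and z: "z \<in> cpolydisc (R/2)"
  shows "norm (g z) \<le> B * 2 ^ CARD('n) * (\<Sum>\<beta>\<in>M. \<Prod>i\<in>UNIV. (1 / R) ^ \<beta> i) * (\<Sum>\<beta>\<in>M. norm (monomial \<beta> z))"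
proof -
  have "(\<lambda>N. norm (\<Sum>\<alpha>\<in>index_box N. taylor_coeff g R \<alpha> * monomial \<alpha> z)) \<longlonglongrightarrow> norm (g z)"
    by (intro tendsto_norm taylor_expansion_polydisc[OF g R z])
  then have "norm (g z) \<le> B * 2 ^ CARD('n) * (\<Sum>\<beta>\<in>M. \<Prod>i\<in>UNIV. (cmod (z $ i) / R) ^ \<beta> i)"
    by (rule LIMSEQ_le_const2) (use norm_taylor_partial_sum_le_dominated[OF assms] in auto)
  also have "\<dots> \<le> B * 2 ^ CARD('n) * ((\<Sum>\<beta>\<in>M. \<Prod>i\<in>UNIV. (1 / R) ^ \<beta> i) * (\<Sum>\<beta>\<in>M. norm (monomial \<beta> z)))"
    using B(2) by (intro mult_left_mono sum_scaled_monomials_le M(1) R) auto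
  finally show ?thesis by (simp add: mult.assoc)
qed

lemma polydisc_holomorphic_list_bound:
  fixes gs :: "(complex ^ 'n \<Rightarrow> complex) list"
  assumes "\<forall>g\<in>set gs. polydisc_holomorphic g R"
  obtains B where "B \<ge> 0" "\<And>g w. g \<in> set gs \<Longrightarrow> w \<in> cpolydisc R \<Longrightarrow> norm (g w) \<le> B"
proof -
  have "\<exists>B\<ge>0. \<forall>g\<in>set gs. \<forall>w\<in>cpolydisc R. norm (g w) \<le> B"
    using assms
  proof (induction gs)
    case (Cons a gs)
    then obtain B where B: "B \<ge> 0" "\<forall>g\<in>set gs. \<forall>w\<in>cpolydisc R. norm (g w) \<le> B" by auto
    obtain Ba where "Ba \<ge> 0" "\<And>w. w \<in> cpolydisc R \<Longrightarrow> norm (a w) \<le> Ba"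
      using polydisc_holomorphic_bound[of a R] Cons.prems by auto
    with B show ?case by (intro exI[of _ "max B Ba"]) (fastforce intro: le_max_iff_disj[THEN iffD2])
  qed auto
  then show ?thesis using that by blast
qed

lemma sum_sq_le_monomial_sum:
  fixes gs :: "(complex ^ 'n::finite \<Rightarrow> complex) list"
  assumes R: "R > 0" and g: "\<forall>g\<in>set gs. polydisc_holomorphic g R"
    and M: "finite M" "\<And>g \<alpha>. g \<in> set gs \<Longrightarrow> taylor_coeff g R \<alpha> \<noteq> 0 \<Longrightarrow> \<exists>\<beta>\<in>M. \<forall>i. \<beta> i \<le> \<alpha> i"
  obtains K where "K > 0"
    "\<And>z. z \<in> cpolydisc (R/2) \<Longrightarrow> (\<Sum>g\<leftarrow>gs. (cmod (g z))\<^sup>2) \<le> K * (\<Sum>\<beta>\<in>M. (cmod (monomial \<beta> z))\<^sup>2)"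
proof -
  obtain B where B: "B \<ge> 0" "\<And>g w. g \<in> set gs \<Longrightarrow> w \<in> cpolydisc R \<Longrightarrow> norm (g w) \<le> B"
    using polydisc_holomorphic_list_bound[OF g] by blast
  define Q where "Q = (\<Sum>\<beta>\<in>M. \<Prod>i\<in>UNIV. (1 / R) ^ \<beta> i)"
  define K1 where "K1 = (B * 2 ^ CARD('n) * Q)\<^sup>2 * real (card M)"
  have "(\<Sum>g\<leftarrow>gs. (cmod (g z))\<^sup>2) \<le> (real (length gs) * K1 + 1) * (\<Sum>\<beta>\<in>M. (cmod (monomial \<beta> z))\<^sup>2)"
    if z: "z \<in> cpolydisc (R/2)" for z
  proof -
    define T where "T = (\<Sum>\<beta>\<in>M. norm (monomial \<beta> z))"
    define P where "P = (\<Sum>\<beta>\<in>M. (cmod (monomial \<beta> z))\<^sup>2)"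
    have "(norm (g z))\<^sup>2 \<le> K1 * P" if "g \<in> set gs" for g
    proof -
      have "polydisc_holomorphic g R" using g that by blast
      from norm_le_sum_dominated_monomials[OF this R B(2)[OF that] B(1) M(1) M(2)[OF that] z]
      have "norm (g z) \<le> B * 2 ^ CARD('n) * Q * T" unfolding Q_def T_def .
      then have "(norm (g z))\<^sup>2 \<le> (B * 2 ^ CARD('n) * Q * T)\<^sup>2"
        by (rule power_mono) simp
      also have "\<dots> = (B * 2 ^ CARD('n) * Q)\<^sup>2 * T\<^sup>2"
        by (simp add: power_mult_distrib)
      also have "\<dots> \<le> (B * 2 ^ CARD('n) * Q)\<^sup>2 * (P * real (card M))"
        unfolding T_def P_def by (intro mult_left_mono sum_squared_le_sum_of_squares) auto
      finally show ?thesis unfolding K1_def by (simp add: mult_ac)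
    qed
    then have "(\<Sum>g\<leftarrow>gs. (cmod (g z))\<^sup>2) \<le> (\<Sum>g\<leftarrow>gs. K1 * P)"
      by (rule sum_list_mono)
    also have "\<dots> = real (length gs) * K1 * P"
      by (simp add: sum_list_triv)
    also have "\<dots> \<le> (real (length gs) * K1 + 1) * P"
      using sum_nonneg[of M "\<lambda>\<beta>. (cmod (monomial \<beta> z))\<^sup>2"] unfolding P_def by (simp add: distrib_right)
    finally show ?thesis unfolding P_def .
  qed
  moreover have "real (length gs) * K1 + 1 > 0" unfolding K1_def by (simp add: add_nonneg_pos)
  ultimately show ?thesis using that by blast
qed

lemma monomial_sq_le_orbit_bound:
  fixes g :: "complex ^ 'n::finite \<Rightarrow> complex"
  assumes g: "polydisc_holomorphic g R" and R: "R > 0" and z: "z \<in> cpolydisc (R/2)"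
    and coeff: "taylor_coeff g R \<beta> \<noteq> 0"
    and D: "\<And>th. (norm (g (torus_action th z)))\<^sup>2 \<le> D"
  shows "(cmod (monomial \<beta> z))\<^sup>2 \<le> D / (cmod (taylor_coeff g R \<beta>))\<^sup>2"
proof -
  have "D \<ge> 0" using D[of 0] by (meson order_trans zero_le_power2)
  have "norm (g (torus_action th z)) \<le> sqrt D" for th
    using D by (intro real_le_rsqrt)
  then have "norm (taylor_coeff g R \<beta> * monomial \<beta> z) \<le> sqrt D"
    by (rule norm_taylor_term_le_orbit_bound[OF g R z])
  then have "(norm (taylor_coeff g R \<beta> * monomial \<beta> z))\<^sup>2 \<le> (sqrt D)\<^sup>2"
    by (rule power_mono) simp
  then have "(cmod (taylor_coeff g R \<beta>))\<^sup>2 * (cmod (monomial \<beta> z))\<^sup>2 \<le> D"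
    using \<open>D \<ge> 0\<close> by (simp add: norm_mult power_mult_distrib)
  then show ?thesis using coeff by (simp add: field_simps)
qed

text \<open>The lower bound only needs the sum of squares to be controlled on the torus orbit
  of \<open>z\<close>, which is what toric invariance of \<open>\<phi>\<close> provides.\<close>

lemma monomial_sum_le_sum_sq:
  fixes gs :: "(complex ^ 'n::finite \<Rightarrow> complex) list"
  assumes R: "R > 0" and g: "\<forall>g\<in>set gs. polydisc_holomorphic g R"
    and M: "finite M" "\<And>\<beta>. \<beta> \<in> M \<Longrightarrow> \<exists>g\<in>set gs. taylor_coeff g R \<beta> \<noteq> 0"
  obtains \<nu> where "\<nu> \<ge> 0"
    "\<And>z \<Lambda>. z \<in> cpolydisc (R/2) \<Longrightarrow>
       (\<And>th. (\<Sum>g\<leftarrow>gs. (cmod (g (torus_action th z)))\<^sup>2) \<le> \<Lambda> * (\<Sum>g\<leftarrow>gs. (cmod (g z))\<^sup>2)) \<Longrightarrow>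
       (\<Sum>\<beta>\<in>M. (cmod (monomial \<beta> z))\<^sup>2) \<le> \<Lambda> * \<nu> * (\<Sum>g\<leftarrow>gs. (cmod (g z))\<^sup>2)"
proof -
  have "\<forall>\<beta>\<in>M. \<exists>g. g \<in> set gs \<and> taylor_coeff g R \<beta> \<noteq> 0" using M(2) by blast
  from bchoice[OF this] obtain G where G: "\<And>\<beta>. \<beta> \<in> M \<Longrightarrow> G \<beta> \<in> set gs \<and> taylor_coeff (G \<beta>) R \<beta> \<noteq> 0"
    by blast
  define \<nu> where "\<nu> = (\<Sum>\<beta>\<in>M. 1 / (cmod (taylor_coeff (G \<beta>) R \<beta>))\<^sup>2)"
  have "(\<Sum>\<beta>\<in>M. (cmod (monomial \<beta> z))\<^sup>2) \<le> \<Lambda> * \<nu> * (\<Sum>g\<leftarrow>gs. (cmod (g z))\<^sup>2)"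
    if z: "z \<in> cpolydisc (R/2)"
      and orbit: "\<And>th. (\<Sum>g\<leftarrow>gs. (cmod (g (torus_action th z)))\<^sup>2) \<le> \<Lambda> * (\<Sum>g\<leftarrow>gs. (cmod (g z))\<^sup>2)"
    for z \<Lambda>
  proof -
    have "(cmod (monomial \<beta> z))\<^sup>2 \<le> \<Lambda> * (\<Sum>g\<leftarrow>gs. (cmod (g z))\<^sup>2) / (cmod (taylor_coeff (G \<beta>) R \<beta>))\<^sup>2"
      if "\<beta> \<in> M" for \<beta>
    proof (rule monomial_sq_le_orbit_bound[OF _ R z])
      show "polydisc_holomorphic (G \<beta>) R" "taylor_coeff (G \<beta>) R \<beta> \<noteq> 0" using G[OF that] g by auto
      have "(norm (G \<beta> (torus_action th z)))\<^sup>2 \<le> (\<Sum>g\<leftarrow>gs. (cmod (g (torus_action th z)))\<^sup>2)" for th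
        using G[OF that] by (intro member_le_sum_list) auto
      then show "(norm (G \<beta> (torus_action th z)))\<^sup>2 \<le> \<Lambda> * (\<Sum>g\<leftarrow>gs. (cmod (g z))\<^sup>2)" for th
        using orbit[of th] by (rule order_trans)
    qed
    then have "(\<Sum>\<beta>\<in>M. (cmod (monomial \<beta> z))\<^sup>2)
        \<le> (\<Sum>\<beta>\<in>M. \<Lambda> * (\<Sum>g\<leftarrow>gs. (cmod (g z))\<^sup>2) / (cmod (taylor_coeff (G \<beta>) R \<beta>))\<^sup>2)"
      by (rule sum_mono)
    then show ?thesis unfolding \<nu>_def by (simp add: sum_distrib_left divide_inverse mult_ac)
  qed
  moreover have "\<nu> \<ge> 0" unfolding \<nu>_def by (intro sum_nonneg) auto
  ultimately show ?thesis using that by blast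
qed

lemma sum_sq_comparable_monomial_sum:
  fixes gs :: "(complex ^ 'n::finite \<Rightarrow> complex) list"
  assumes R: "R > 0" and g: "\<forall>g\<in>set gs. polydisc_holomorphic g R"
  obtains M K \<nu> where "finite M" "K > 0" "\<nu> \<ge> 0"
    "\<And>z. z \<in> cpolydisc (R/2) \<Longrightarrow> (\<Sum>g\<leftarrow>gs. (cmod (g z))\<^sup>2) \<le> K * (\<Sum>\<beta>\<in>M. (cmod (monomial \<beta> z))\<^sup>2)"
    "\<And>z \<Lambda>. z \<in> cpolydisc (R/2) \<Longrightarrow>
       (\<And>th. (\<Sum>g\<leftarrow>gs. (cmod (g (torus_action th z)))\<^sup>2) \<le> \<Lambda> * (\<Sum>g\<leftarrow>gs. (cmod (g z))\<^sup>2)) \<Longrightarrow>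
       (\<Sum>\<beta>\<in>M. (cmod (monomial \<beta> z))\<^sup>2) \<le> \<Lambda> * \<nu> * (\<Sum>g\<leftarrow>gs. (cmod (g z))\<^sup>2)"
proof -
  define A where "A = {\<alpha>. \<exists>g\<in>set gs. taylor_coeff g R \<alpha> \<noteq> 0}"
  obtain M where M: "finite M" "M \<subseteq> A" and cover: "\<And>\<alpha>. \<alpha> \<in> A \<Longrightarrow> \<exists>\<beta>\<in>M. \<forall>i. \<beta> i \<le> \<alpha> i"
    using dickson_lemma[of A] by blast
  have "\<And>g \<alpha>. g \<in> set gs \<Longrightarrow> taylor_coeff g R \<alpha> \<noteq> 0 \<Longrightarrow> \<exists>\<beta>\<in>M. \<forall>i. \<beta> i \<le> \<alpha> i"
    using cover unfolding A_def by blast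
  with R g M(1) obtain K where K: "K > 0"
    "\<And>z. z \<in> cpolydisc (R/2) \<Longrightarrow> (\<Sum>g\<leftarrow>gs. (cmod (g z))\<^sup>2) \<le> K * (\<Sum>\<beta>\<in>M. (cmod (monomial \<beta> z))\<^sup>2)"
    by (rule sum_sq_le_monomial_sum) auto
  have "\<And>\<beta>. \<beta> \<in> M \<Longrightarrow> \<exists>g\<in>set gs. taylor_coeff g R \<beta> \<noteq> 0"
    using M(2) unfolding A_def by blast
  with R g M(1) obtain \<nu> where \<nu>: "\<nu> \<ge> 0"
    "\<And>z \<Lambda>. z \<in> cpolydisc (R/2) \<Longrightarrow>
       (\<And>th. (\<Sum>g\<leftarrow>gs. (cmod (g (torus_action th z)))\<^sup>2) \<le> \<Lambda> * (\<Sum>g\<leftarrow>gs. (cmod (g z))\<^sup>2)) \<Longrightarrow>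
       (\<Sum>\<beta>\<in>M. (cmod (monomial \<beta> z))\<^sup>2) \<le> \<Lambda> * \<nu> * (\<Sum>g\<leftarrow>gs. (cmod (g z))\<^sup>2)"
    by (rule monomial_sum_le_sum_sq) auto
  show ?thesis by (rule that[OF M(1) K(1) \<nu>(1) K(2) \<nu>(2)])
qed

section \<open>Logarithmic bounds\<close>

lemma elog_pos: "x > 0 \<Longrightarrow> elog x = ereal (ln x)"
  by (simp add: elog_def)

definition log_comparable_at_0 :: "(complex ^ 'n \<Rightarrow> ereal) \<Rightarrow> real \<Rightarrow> (complex ^ 'n \<Rightarrow> real) \<Rightarrow> bool" where
  "log_comparable_at_0 \<phi> c f \<longleftrightarrow> (\<exists>r>0. \<exists>C. \<forall>z\<in>ball 0 r.
     ereal c * elog (f z) - ereal C \<le> \<phi> z \<and> \<phi> z \<le> ereal c * elog (f z) + ereal C)"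

lemma log_comparable_at_0_ball:
  assumes "r > 0" "\<And>z. z \<in> ball 0 r \<Longrightarrow> ereal c * elog (f z) - ereal C \<le> \<phi> z \<and> \<phi> z \<le> ereal c * elog (f z) + ereal C"
  shows "log_comparable_at_0 \<phi> c f"
  unfolding log_comparable_at_0_def using assms by blast

lemma log_comparable_at_0_zero_imp_const:
  assumes "log_comparable_at_0 \<phi> 0 f"
  shows "log_comparable_at_0 \<phi> c (\<lambda>_. 1)"
  using assms unfolding log_comparable_at_0_def by (simp add: elog_def zero_ereal_def[symmetric])

lemma elog_bounds_transfer:
  fixes c C K L S P :: real and v :: ereal
  assumes c: "c > 0" and K: "K > 0" and L: "L \<ge> 0" and S: "S \<ge> 0"
    and lower: "P \<le> L * S" and upper: "S \<le> K * P"
    and v: "ereal c * elog S - ereal C \<le> v" "v \<le> ereal c * elog S + ereal C"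
  shows "ereal c * elog P - ereal (C + c * (ln (L + 1) + \<bar>ln K\<bar>)) \<le> v \<and>
         v \<le> ereal c * elog P + ereal (C + c * (ln (L + 1) + \<bar>ln K\<bar>))"
proof (cases "S = 0")
  case True
  then have "P = 0" "v = -\<infinity>" using lower upper K v(2) c by (auto simp: elog_def zero_le_mult_iff)
  then show ?thesis using c by (simp add: elog_def)
next
  case False
  then have S: "S > 0" using S by simp
  then have "K * P > 0" using upper by linarith
  then have P: "P > 0" using K by (simp add: zero_less_mult_iff)
  have "ln P \<le> ln ((L + 1) * S)" "ln S \<le> ln (K * P)"
    using lower upper L K P S by (simp_all add: distrib_right)
  then have "ln P \<le> ln (L + 1) + ln S" "ln S \<le> ln K + ln P" "ln (L + 1) \<ge> 0"
    using L K P S by (simp_all add: ln_mult)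
  then have "c * (ln P - (ln (L + 1) + \<bar>ln K\<bar>)) \<le> c * ln S" "c * ln S \<le> c * (ln P + (ln (L + 1) + \<bar>ln K\<bar>))"
    using c by (intro mult_left_mono; linarith)+
  then have lower': "ereal (c * ln P - (C + c * (ln (L + 1) + \<bar>ln K\<bar>))) \<le> ereal (c * ln S - C)"
      and upper': "ereal (c * ln S + C) \<le> ereal (c * ln P + (C + c * (ln (L + 1) + \<bar>ln K\<bar>)))"
    by (simp_all add: algebra_simps)
  have "ereal (c * ln S - C) \<le> v" "v \<le> ereal (c * ln S + C)"
    using v S by (simp_all add: elog_pos)
  then show ?thesis
    using order_trans[OF lower'] order_trans[OF _ upper'] P by (simp add: elog_pos)
qed

lemma le_exp_mult_of_elog_bounds:
  fixes c C x y :: real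
  assumes c: "c > 0" and "x \<ge> 0" "y \<ge> 0"
    and le: "ereal c * elog x - ereal C \<le> ereal c * elog y + ereal C"
  shows "x \<le> exp (2 * C / c) * y"
proof (cases "x = 0")
  case False
  then have x: "x > 0" using assms(2) by simp
  show ?thesis
  proof (cases "y = 0")
    case True
    then show ?thesis using le x c by (simp add: elog_pos elog_def)
  next
    case False
    then have y: "y > 0" using assms(3) by simp
    then have "c * ln x - C \<le> c * ln y + C" using le x by (simp add: elog_pos)
    then have "ln x \<le> ln y + 2 * C / c" using c by (simp add: field_simps)
    then have "exp (ln x) \<le> exp (ln y + 2 * C / c)" by simp
    then show ?thesis using x y by (simp add: exp_add mult.commute)
  qed
qed (use assms in simp)

section \<open>Toric functions with analytic singularities\<close>

lemma toric_orbit_bound: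
  fixes f :: "complex ^ 'n \<Rightarrow> real"
  assumes toric: "toric U \<phi>" and c: "c > 0" and sub: "cpolydisc R \<subseteq> U" and f: "\<And>z. f z \<ge> 0"
    and bnd: "\<And>z. z \<in> cpolydisc R \<Longrightarrow>
       ereal c * elog (f z) - ereal C \<le> \<phi> z \<and> \<phi> z \<le> ereal c * elog (f z) + ereal C"
    and z: "z \<in> cpolydisc R"
  shows "f (torus_action th z) \<le> exp (2 * C / c) * f z"
proof -
  have "\<phi> (torus_action th z) = \<phi> z"
    using toric z sub unfolding toric_def torus_action_eq_cis by (simp add: subset_iff)
  then have "ereal c * elog (f (torus_action th z)) - ereal C \<le> ereal c * elog (f z) + ereal C"
    using bnd[OF z] bnd[OF torus_action_in_cpolydisc[OF z]] by (metis order_trans)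
  then show ?thesis by (rule le_exp_mult_of_elog_bounds[OF c f f])
qed

lemma analytic_sing_near_origin:
  fixes \<phi> :: "complex ^ 'n \<Rightarrow> ereal"
  assumes "analytic_sing unit_polydisk \<phi>"
  obtains R c gs C where "R > 0" "c \<ge> 0" "\<forall>g\<in>set gs. polydisc_holomorphic g R"
    "cpolydisc R \<subseteq> (unit_polydisk :: (complex ^ 'n) set)"
    "\<And>z. z \<in> cpolydisc R \<Longrightarrow>
       ereal c * elog (\<Sum>g\<leftarrow>gs. (cmod (g z))\<^sup>2) - ereal C \<le> \<phi> z \<and>
       \<phi> z \<le> ereal c * elog (\<Sum>g\<leftarrow>gs. (cmod (g z))\<^sup>2) + ereal C"
proof -
  have "0 \<in> unit_polydisk" by (simp add: unit_polydisk_def)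
  then obtain V c gs C where V: "open V" "0 \<in> V" "V \<subseteq> unit_polydisk" and "c \<ge> 0"
    and holo: "\<forall>g\<in>set gs. holo_on V g"
    and bnd: "\<And>z. z \<in> V \<Longrightarrow> ereal c * elog (\<Sum>g\<leftarrow>gs. (cmod (g z))\<^sup>2) - ereal C \<le> \<phi> z \<and>
              \<phi> z \<le> ereal c * elog (\<Sum>g\<leftarrow>gs. (cmod (g z))\<^sup>2) + ereal C"
    using assms unfolding analytic_sing_def by metis
  obtain r where r: "r > 0" "ball 0 r \<subseteq> V"
    using V(1,2) open_contains_ball by blast
  define R where "R = r / (real CARD('n) + 1)"
  have R: "R > 0" unfolding R_def using r by simp
  have "cpolydisc R \<subseteq> (ball 0 r :: (complex ^ 'n) set)"
  proof
    fix z :: "complex ^ 'n" assume "z \<in> cpolydisc R"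
    then have "norm z \<le> real CARD('n) * R" by (rule norm_le_card_mult_radius)
    also have "\<dots> < r" unfolding R_def using r by (simp add: field_simps)
    finally show "z \<in> ball 0 r" by simp
  qed
  with r have sub: "cpolydisc R \<subseteq> V" by blast
  show ?thesis
    using that[OF R \<open>c \<ge> 0\<close> _ _ bnd] holo_on_imp_polydisc_holomorphic[OF _ sub] holo sub V(3) by blast
qed

lemma toric_analytic_sing_monomial_bounds:
  fixes \<phi> :: "complex ^ 'n::finite \<Rightarrow> ereal"
  assumes toric: "toric unit_polydisk \<phi>" and c: "c > 0" and R: "R > 0"
    and g: "\<forall>g\<in>set gs. polydisc_holomorphic g R" and sub: "cpolydisc R \<subseteq> (unit_polydisk :: (complex ^ 'n) set)"
    and bnd: "\<And>z. z \<in> cpolydisc R \<Longrightarrow>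
       ereal c * elog (\<Sum>g\<leftarrow>gs. (cmod (g z))\<^sup>2) - ereal C \<le> \<phi> z \<and>
       \<phi> z \<le> ereal c * elog (\<Sum>g\<leftarrow>gs. (cmod (g z))\<^sup>2) + ereal C"
  obtains \<alpha>s where "log_comparable_at_0 \<phi> c (\<lambda>z. \<Sum>\<alpha>\<leftarrow>\<alpha>s. (cmod (monomial \<alpha> z))\<^sup>2)"
proof -
  define S where "S z = (\<Sum>g\<leftarrow>gs. (cmod (g z))\<^sup>2)" for z
  have S: "S z \<ge> 0" for z unfolding S_def by (intro sum_list_nonneg) auto
  obtain M K \<nu> where M: "finite M" and K: "K > 0" and \<nu>: "\<nu> \<ge> 0"
    and upper: "\<And>z. z \<in> cpolydisc (R/2) \<Longrightarrow> S z \<le> K * (\<Sum>\<beta>\<in>M. (cmod (monomial \<beta> z))\<^sup>2)"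
    and lower: "\<And>z \<Lambda>. z \<in> cpolydisc (R/2) \<Longrightarrow> (\<And>th. S (torus_action th z) \<le> \<Lambda> * S z) \<Longrightarrow>
       (\<Sum>\<beta>\<in>M. (cmod (monomial \<beta> z))\<^sup>2) \<le> \<Lambda> * \<nu> * S z"
    using sum_sq_comparable_monomial_sum[OF R g] unfolding S_def by blast
  obtain \<alpha>s where \<alpha>s: "distinct \<alpha>s" "set \<alpha>s = M"
    using finite_distinct_list[OF M] by blast
  define L where "L = exp (2 * C / c) * \<nu>"
  have L: "L \<ge> 0" unfolding L_def using \<nu> by simp
  have "ereal c * elog (\<Sum>\<beta>\<in>M. (cmod (monomial \<beta> z))\<^sup>2) - ereal (C + c * (ln (L + 1) + \<bar>ln K\<bar>)) \<le> \<phi> z \<and>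
        \<phi> z \<le> ereal c * elog (\<Sum>\<beta>\<in>M. (cmod (monomial \<beta> z))\<^sup>2) + ereal (C + c * (ln (L + 1) + \<bar>ln K\<bar>))"
    if "z \<in> ball 0 (R/2)" for z
  proof -
    have z: "z \<in> cpolydisc (R/2)" using that ball_subset_cpolydisc by blast
    then have z': "z \<in> cpolydisc R" using R cpolydisc_mono[of "R/2" R] by auto
    have "S (torus_action th z) \<le> exp (2 * C / c) * S z" for th
      by (rule toric_orbit_bound[OF toric c sub S _ z']) (use bnd in \<open>simp add: S_def\<close>)
    then have "(\<Sum>\<beta>\<in>M. (cmod (monomial \<beta> z))\<^sup>2) \<le> exp (2 * C / c) * \<nu> * S z"
      by (rule lower[OF z])
    then have "(\<Sum>\<beta>\<in>M. (cmod (monomial \<beta> z))\<^sup>2) \<le> L * S z"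
      unfolding L_def .
    from elog_bounds_transfer[OF c K L S this upper[OF z]] bnd[OF z']
    show ?thesis by (simp add: S_def)
  qed
  then have "log_comparable_at_0 \<phi> c (\<lambda>z. \<Sum>\<alpha>\<leftarrow>\<alpha>s. (cmod (monomial \<alpha> z))\<^sup>2)"
    using R \<alpha>s by (intro log_comparable_at_0_ball[of "R/2"]) (simp_all add: sum_list_distinct_conv_sum_set)
  then show ?thesis by (rule that)
qed

theorem proposition3p1:
  fixes \<phi> :: "complex ^ 'n \<Rightarrow> ereal"
  assumes "psh unit_polydisk \<phi>"
    and "toric unit_polydisk \<phi>"
    and "analytic_sing unit_polydisk \<phi>"
  shows "\<exists>(c::real) (\<alpha>s :: ('n \<Rightarrow> nat) list). c > 0 \<and>
           (\<exists>r>0. \<exists>C::real. \<forall>z\<in>ball 0 r.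
              ereal (c/2) * elog (\<Sum>\<alpha>\<leftarrow>\<alpha>s. (cmod (monomial \<alpha> z))\<^sup>2) - ereal C \<le> \<phi> z \<and>
              \<phi> z \<le> ereal (c/2) * elog (\<Sum>\<alpha>\<leftarrow>\<alpha>s. (cmod (monomial \<alpha> z))\<^sup>2) + ereal C)"
proof -
  obtain R c gs C where R: "R > 0" and "c \<ge> 0" and g: "\<forall>g\<in>set gs. polydisc_holomorphic g R"
    and sub: "cpolydisc R \<subseteq> (unit_polydisk :: (complex ^ 'n) set)"
    and bnd: "\<And>z. z \<in> cpolydisc R \<Longrightarrow>
       ereal c * elog (\<Sum>g\<leftarrow>gs. (cmod (g z))\<^sup>2) - ereal C \<le> \<phi> z \<and>
       \<phi> z \<le> ereal c * elog (\<Sum>g\<leftarrow>gs. (cmod (g z))\<^sup>2) + ereal C"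
    using analytic_sing_near_origin[OF assms(3)] by blast
  have "\<exists>c' (\<alpha>s :: ('n \<Rightarrow> nat) list). c' > 0 \<and>
      log_comparable_at_0 \<phi> (c'/2) (\<lambda>z. \<Sum>\<alpha>\<leftarrow>\<alpha>s. (cmod (monomial \<alpha> z))\<^sup>2)"
  proof (cases "c = 0")
    case True
    then have "log_comparable_at_0 \<phi> 0 (\<lambda>z. \<Sum>g\<leftarrow>gs. (cmod (g z))\<^sup>2)"
      using bnd ball_subset_cpolydisc[of R] True by (intro log_comparable_at_0_ball[OF R, where C = C]) blast
    then have "log_comparable_at_0 \<phi> (1/2) (\<lambda>z. \<Sum>\<alpha>\<leftarrow>[\<lambda>_. 0]. (cmod (monomial \<alpha> z))\<^sup>2)"
      using log_comparable_at_0_zero_imp_const by (simp add: monomial_def)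
    then show ?thesis by (intro exI[of _ "1::real"] exI[of _ "[\<lambda>_. 0]"]) simp
  next
    case False
    with toric_analytic_sing_monomial_bounds[OF assms(2) _ R g sub bnd] \<open>c \<ge> 0\<close>
    obtain \<alpha>s where "log_comparable_at_0 \<phi> c (\<lambda>z. \<Sum>\<alpha>\<leftarrow>\<alpha>s. (cmod (monomial \<alpha> z))\<^sup>2)" by force
    then show ?thesis using \<open>c \<ge> 0\<close> False by (intro exI[of _ "2 * c"] exI[of _ \<alpha>s]) simp
  qed
  then show ?thesis unfolding log_comparable_at_0_def .
qed

end
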